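(* Let $r,k\in\mathbb Z$ with $0\le k\le r$, and suppose Assumption (A1) holds. Then there is a constant $\kappa_{r,k}>0$, independent of $\tau_n$ and $n$, such that for all $\varphi\in P_r(I_n,\mathbb R^d)$ $$\int_{I_n}\|\varphi'(t)\|\,dt\le\tau_n\sup_{t\in I_n}\|\varphi'(t)\|\le\kappa_{r,k}\Big(\sum_{i=1}^{\lfloor (k-1)/2\rfloor}\big(\tfrac{\tau_n}{2}\big)^i\|\varphi^{(i)}(t_{n-1}^+)\|+\sum_{i=1}^{\lfloor k/2\rfloor}\big(\tfrac{\tau_n}{2}\big)^i\|\varphi^{(i)}(t_n^-)\|+\sum_{i=\delta_{0,k}}^{r-k}\Big\|\mathscr I_n\big[\varphi'(t)(1+T_n^{-1}(t))^i\big]\Big\|\Big)$$ and $$\sup_{t\in I_n}\|\varphi(t)\|\le\min\{\|\varphi(t_{n-1}^+)\|,\|\varphi(t_n^-)\|\}+\int_{I_n}\|\varphi'(t)\|\,dt.$$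
   Context: Mesh: $t_0<t_1<\dots<t_N$, $I_n=(t_{n-1},t_n]$, $\tau_n=t_n-t_{n-1}\le1$; $v(t_n^\pm)$ denote one-sided limits. $T_n(\hat t)=\frac{t_n+t_{n-1}}{2}+\frac{\tau_n}{2}\hat t$ maps $(-1,1]$ onto $I_n$. $\|\cdot\|$ is the Euclidean norm on $\mathbb R^d$; $P_s$ denotes polynomials of degree at most $s$; $\delta_{i,j}$ is the Kronecker symbol; empty sums are zero. $\widehat{\mathscr I}$ is a linear functional (reference integrator) on $C^{k_{\mathscr I}}([-1,1])$ and its local version is $\mathscr I_n[\varphi]=\frac{\tau_n}{2}\widehat{\mathscr I}[\varphi\circ T_n]$, acting componentwise on vector-valued functions. Assumption (A1): whenever $\hat\psi\in P_{r-\max\{1,k\}}([-1,1])$ satisfies $\widehat{\mathscr I}\big[(1-\hat t)^{\lfloor k/2\rfloor}(1+\hat t)^{|\lfloor (k-1)/2\rfloor|}\hat\psi\,\hat\varphi\big]=0$ for all $\hat\varphi\in P_{r-\max\{1,k\}}([-1,1])$, then $\hat\psi\equiv0$. *)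

theory Defs
  imports "HOL-Analysis.Analysis"
begin

text \<open>Real polynomial functions of degree at most m (m an integer; for m < 0 only the zero function).\<close>
definition poly_fun_le :: "int \<Rightarrow> (real \<Rightarrow> real) \<Rightarrow> bool" where
  "poly_fun_le m f \<longleftrightarrow> (\<exists>c::nat \<Rightarrow> real. \<forall>t. f t = (\<Sum>i<nat (m + 1). c i * t ^ i))"

definition is_poly_fun :: "(real \<Rightarrow> real) \<Rightarrow> bool" where
  "is_poly_fun f \<longleftrightarrow> (\<exists>m. poly_fun_le m f)"

definition vpoly_fun_le :: "int \<Rightarrow> (real \<Rightarrow> 'a::real_vector) \<Rightarrow> bool" where
  "vpoly_fun_le m f \<longleftrightarrow> (\<exists>c::nat \<Rightarrow> 'a. \<forall>t. f t = (\<Sum>i<nat (m + 1). t ^ i *\<^sub>R c i))"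

definition vdiff :: "(real \<Rightarrow> 'a::real_normed_vector) \<Rightarrow> real \<Rightarrow> 'a" where
  "vdiff g = (\<lambda>x. vector_derivative g (at x))"

definition vdiffn :: "nat \<Rightarrow> (real \<Rightarrow> 'a::real_normed_vector) \<Rightarrow> real \<Rightarrow> 'a" where
  "vdiffn i g = (vdiff ^^ i) g"

definition Tmap :: "real \<Rightarrow> real \<Rightarrow> real \<Rightarrow> real" where
  "Tmap a b s = (a + b) / 2 + (b - a) / 2 * s"

definition Tinv :: "real \<Rightarrow> real \<Rightarrow> real \<Rightarrow> real" where
  "Tinv a b t = (2 * t - a - b) / (b - a)"

definition loc_int :: "((real \<Rightarrow> real) \<Rightarrow> real) \<Rightarrow> real \<Rightarrow> real \<Rightarrow> (real \<Rightarrow> 'a::euclidean_space) \<Rightarrow> 'a" where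
  "loc_int I a b \<psi> = (\<Sum>j\<in>Basis. ((b - a) / 2 * I (\<lambda>s. \<psi> (Tmap a b s) \<bullet> j)) *\<^sub>R j)"

definition A1 :: "((real \<Rightarrow> real) \<Rightarrow> real) \<Rightarrow> int \<Rightarrow> int \<Rightarrow> bool" where
  "A1 I r k \<longleftrightarrow> (\<forall>\<psi>. poly_fun_le (r - max 1 k) \<psi> \<longrightarrow>
      (\<forall>\<phi>. poly_fun_le (r - max 1 k) \<phi> \<longrightarrow>
         I (\<lambda>t. (1 - t) ^ nat (k div 2) * (1 + t) ^ nat \<bar>(k - 1) div 2\<bar> * \<psi> t * \<phi> t) = 0)
      \<longrightarrow> (\<forall>t\<in>{-1..1}. \<psi> t = 0))"

end

theory Submission
  imports Defs "HOL-Computational_Algebra.Polynomial" "HOL-Library.Function_Algebras"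
begin

text \<open>On the reference interval \<open>[-1, 1]\<close>, the derivatives of order \<open>< \<lfloor>(k - 1)/2\<rfloor>\<close> at
  \<open>-1\<close> and \<open>< \<lfloor>k/2\<rfloor>\<close> at \<open>1\<close>, together with the weighted moments
  \<open>I[(1 + s)^i q]\<close>, are linear functionals on the polynomials \<open>q\<close> of degree \<open>< r\<close> with no
  common zero besides \<open>q = 0\<close>: such a \<open>q\<close> factors as \<open>(1 + s)^m\<^sub>1 (1 - s)^m\<^sub>2 w\<close>, and the vanishing
  moments make \<open>w\<close> orthogonal, with the weight of (A1), to all polynomials of degree
  \<open>\<le> r - max 1 k\<close>, so \<open>w = 0\<close> by (A1). In finite dimension these functionals therefore
  bound the supremum on \<open>[-1, 1]\<close>. Applied componentwise to \<open>q = \<phi>' \<circ> T\<^sub>n\<close>, the chain rule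
  produces the factors \<open>(\<tau>\<^sub>n/2)^i\<close>; the two other inequalities are the mean value bound for
  the integral and the fundamental theorem of calculus from either endpoint.\<close>

lemma abs_poly_le_sum_abs_coeff:
  fixes p :: "real poly"
  assumes "\<bar>s\<bar> \<le> 1"
  shows "\<bar>poly p s\<bar> \<le> (\<Sum>i\<le>degree p. \<bar>coeff p i\<bar>)"
proof -
  have "\<bar>poly p s\<bar> \<le> (\<Sum>i\<le>degree p. \<bar>coeff p i * s ^ i\<bar>)"
    unfolding poly_altdef by (rule sum_abs)
  also have "\<dots> \<le> (\<Sum>i\<le>degree p. \<bar>coeff p i\<bar>)"
    by (rule sum_mono) (auto simp: abs_mult power_abs intro!: mult_left_le power_le_one assms)
  finally show ?thesis .
qed

lemma sum_fun_apply: "(\<Sum>x\<in>A. f x) y = (\<Sum>x\<in>A. f x y)"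
  for f :: "'a \<Rightarrow> 'b \<Rightarrow> 'c::comm_monoid_add"
  by (induction A rule: infinite_finite_induct) auto

lemma poly_expansion_by_separating_functionals:
  fixes F :: "real poly \<Rightarrow> 'j \<Rightarrow> real"
  assumes "finite J"
    and F_add: "\<And>p q x. F (p + q) x = F p x + F q x"
    and F_smult: "\<And>c p x. F (smult c p) x = c * F p x"
    and separating: "\<And>p. \<forall>i\<ge>n. coeff p i = 0 \<Longrightarrow> \<forall>x\<in>J. F p x = 0 \<Longrightarrow> p = 0"
  obtains g where "\<And>p. \<forall>i\<ge>n. coeff p i = 0 \<Longrightarrow> p = (\<Sum>x\<in>J. smult (F p x) (g x))"
proof -
  let ?scale_fun = "\<lambda>(a::real) (f::'j \<Rightarrow> real) x. a * f x"
  define G where "G p = (\<lambda>x. if x \<in> J then F p x else 0)" for p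
  define V where "V = {p::real poly. \<forall>i\<ge>n. coeff p i = 0}"
  interpret vp: vector_space_pair "smult :: real \<Rightarrow> real poly \<Rightarrow> real poly" ?scale_fun
    by unfold_locales (auto simp: smult_add_right smult_add_left algebra_simps)
  have lin: "Vector_Spaces.linear smult ?scale_fun G"
    by unfold_locales (auto simp: G_def F_add F_smult fun_eq_iff algebra_simps)
  have sub: "vp.vs1.subspace V"
    unfolding vp.vs1.subspace_def V_def by auto
  have "inj_on G V"
    using vp.linear_inj_on_iff_eq_0[OF lin sub] separating by (auto simp: V_def G_def fun_eq_iff)
  then obtain g' where lin_g': "Vector_Spaces.linear ?scale_fun smult g'" and g': "\<forall>v\<in>V. g' (G v) = v"
    using vp.linear_exists_left_inverse_on[OF lin sub] by blast
  interpret g': Vector_Spaces.linear ?scale_fun smult g' by (rule lin_g')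
  define e where "e x = (\<lambda>y. if y = x then 1 else (0::real))" for x :: 'j
  show ?thesis
  proof (rule that[of "g' \<circ> e"])
    fix p :: "real poly" assume "\<forall>i\<ge>n. coeff p i = 0"
    have "G p = (\<Sum>x\<in>J. ?scale_fun (F p x) (e x))"
      using \<open>finite J\<close> by (simp add: G_def e_def fun_eq_iff sum_fun_apply if_distrib sum.delta cong: if_cong)
    then have "g' (G p) = (\<Sum>x\<in>J. smult (F p x) (g' (e x)))"
      by (simp add: g'.sum g'.scale)
    then show "p = (\<Sum>x\<in>J. smult (F p x) ((g' \<circ> e) x))"
      using g' \<open>\<forall>i\<ge>n. coeff p i = 0\<close> by (simp add: V_def)
  qed
qed

lemma poly_bounded_by_separating_functionals:
  fixes F :: "real poly \<Rightarrow> 'j \<Rightarrow> real"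
  assumes "finite J"
    and "\<And>p q x. F (p + q) x = F p x + F q x"
    and "\<And>c p x. F (smult c p) x = c * F p x"
    and "\<And>p. \<forall>i\<ge>n. coeff p i = 0 \<Longrightarrow> \<forall>x\<in>J. F p x = 0 \<Longrightarrow> p = 0"
  obtains K where "K > 0"
    and "\<And>p s. \<forall>i\<ge>n. coeff p i = 0 \<Longrightarrow> s \<in> {-1..1} \<Longrightarrow> \<bar>poly p s\<bar> \<le> K * (\<Sum>x\<in>J. \<bar>F p x\<bar>)"
proof -
  obtain g where g: "\<And>p. \<forall>i\<ge>n. coeff p i = 0 \<Longrightarrow> p = (\<Sum>x\<in>J. smult (F p x) (g x))"
    using poly_expansion_by_separating_functionals[of J F n, OF assms] by blast
  define B where "B x = (\<Sum>i\<le>degree (g x). \<bar>coeff (g x) i\<bar>)" for x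
  define K where "K = 1 + (\<Sum>x\<in>J. B x)"
  have B_nonneg: "B x \<ge> 0" for x
    unfolding B_def by (auto intro: sum_nonneg)
  have B_le_K: "B x \<le> K" if "x \<in> J" for x
    using member_le_sum[OF that _ \<open>finite J\<close>, of B] B_nonneg unfolding K_def by force
  show ?thesis
  proof (rule that)
    show "K > 0"
      unfolding K_def using B_nonneg by (smt (verit) sum_nonneg)
  next
    fix p :: "real poly" and s :: real
    assume p: "\<forall>i\<ge>n. coeff p i = 0" and s: "s \<in> {-1..1}"
    have "poly p s = (\<Sum>x\<in>J. F p x * poly (g x) s)"
      by (subst g[OF p]) (simp add: poly_sum)
    also have "\<bar>\<dots>\<bar> \<le> (\<Sum>x\<in>J. \<bar>F p x\<bar> * K)"
      using s B_le_K
      by (auto intro!: order.trans[OF sum_abs] sum_mono mult_left_mono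
               order.trans[OF abs_poly_le_sum_abs_coeff] simp: abs_mult B_def)
    finally show "\<bar>poly p s\<bar> \<le> K * (\<Sum>x\<in>J. \<bar>F p x\<bar>)"
      by (simp add: sum_distrib_left mult.commute)
  qed
qed

lemma poly_eq_0_if_vanishes_on_Icc:
  fixes p :: "real poly"
  assumes "a < b" and "\<forall>t\<in>{a..b}. poly p t = 0"
  shows "p = 0"
proof (rule ccontr)
  assume "p \<noteq> 0"
  then have "finite {x. poly p x = 0}" by (rule poly_roots_finite)
  moreover have "{a..b} \<subseteq> {x. poly p x = 0}" using assms(2) by auto
  ultimately show False using infinite_Icc[OF \<open>a < b\<close>] finite_subset by blast
qed

lemma higher_pderiv_add: "(pderiv ^^ m) (p + q) = (pderiv ^^ m) p + (pderiv ^^ m) q"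
  by (induction m) (auto simp: pderiv_add)

lemma higher_pderiv_smult: "(pderiv ^^ m) (smult c p) = smult c ((pderiv ^^ m) p)"
  by (induction m) (auto simp: pderiv_smult)

lemma higher_pderiv_pcompose_linear:
  fixes p :: "'a::{field, semiring_char_0} poly"
  shows "(pderiv ^^ m) (p \<circ>\<^sub>p [:\<alpha>, \<beta>:]) = smult (\<beta> ^ m) ((pderiv ^^ m) p \<circ>\<^sub>p [:\<alpha>, \<beta>:])"
proof (induction m arbitrary: p)
  case 0
  then show ?case by simp
next
  case (Suc m)
  have "pderiv (p \<circ>\<^sub>p [:\<alpha>, \<beta>:]) = smult \<beta> (pderiv p \<circ>\<^sub>p [:\<alpha>, \<beta>:])"
    by (simp add: pderiv_pcompose pderiv_pCons)
  then show ?case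
    by (simp add: higher_pderiv_smult Suc funpow_Suc_right del: funpow.simps)
qed

lemma order_ge_if_higher_pderivs_vanish:
  fixes q :: "'a::{idom, semiring_char_0} poly"
  assumes "q \<noteq> 0" and "\<forall>i<m. poly ((pderiv ^^ i) q) x = 0"
  shows "m \<le> order x q"
  using assms
proof (induction m arbitrary: q)
  case 0
  then show ?case by simp
next
  case (Suc m)
  have root: "poly q x = 0"
    using Suc.prems(2) by (metis funpow_0 zero_less_Suc)
  have pderiv_vanish: "\<forall>i<m. poly ((pderiv ^^ i) (pderiv q)) x = 0"
    using Suc.prems(2) by (metis Suc_mono funpow_Suc_right o_apply)
  show ?case
  proof (cases "pderiv q = 0")
    case True
    then obtain c where "q = [:c:]" using pderiv_iszero by blast
    then show ?thesis using root Suc.prems(1) by simp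
  next
    case False
    then show ?thesis
      using Suc.IH[OF False pderiv_vanish] order_pderiv[OF Suc.prems(1) root] by simp
  qed
qed

lemma poly_factor_at_plus_minus_one:
  fixes q :: "real poly"
  assumes "\<forall>i<m1. poly ((pderiv ^^ i) q) (-1) = 0" and "\<forall>i<m2. poly ((pderiv ^^ i) q) 1 = 0"
  obtains w where "q = [:1, 1:] ^ m1 * [:1, -1:] ^ m2 * w"
proof (cases "q = 0")
  case True
  then show ?thesis using that[of 0] by simp
next
  case False
  have "[:- (-1), 1:] ^ m1 dvd q"
    using order_ge_if_higher_pderivs_vanish[OF False assms(1)] order_divides by blast
  then obtain q1 where q1: "q = [:1, 1:] ^ m1 * q1" by (auto elim: dvdE)
  have "order 1 ([:1, 1::real:] ^ m1) = 0"
    using order_root[of "[:1, 1::real:] ^ m1" 1] by (simp add: poly_power)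
  then have "m2 \<le> order 1 q1"
    using order_ge_if_higher_pderivs_vanish[OF False assms(2)] order_mult[of "[:1, 1::real:] ^ m1" q1 1]
      False q1 by simp
  then have "[:- 1, 1:] ^ m2 dvd q1"
    using order_divides by blast
  then obtain w where w: "q1 = [:-1, 1:] ^ m2 * w" by (auto elim: dvdE)
  have "[:-1, 1:] ^ m2 * w = [:1, -1:] ^ m2 * smult ((-1) ^ m2) w"
  proof (rule poly_ext)
    fix t :: real
    have "(t - 1) ^ m2 = (1 - t) ^ m2 * (-1) ^ m2"
      by (simp add: power_mult_distrib[symmetric])
    then show "poly ([:-1, 1:] ^ m2 * w) t = poly ([:1, -1:] ^ m2 * smult ((-1) ^ m2) w) t"
      by (simp add: poly_power algebra_simps)
  qed
  then show ?thesis
    using that[of "smult ((-1) ^ m2) w"] q1 w by (simp only: mult.assoc)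
qed

lemma poly_eq_sum_upto:
  fixes p :: "real poly"
  assumes "degree p \<le> n"
  shows "poly p x = (\<Sum>i\<le>n. coeff p i * x ^ i)"
  unfolding poly_altdef using assms by (intro sum.mono_neutral_left) (auto simp: coeff_eq_0)

lemma is_poly_fun_poly: "is_poly_fun (poly (p :: real poly))"
  unfolding is_poly_fun_def poly_fun_le_def
proof (intro exI allI)
  fix t :: real
  show "poly p t = (\<Sum>i<nat (int (degree p) + 1). coeff p i * t ^ i)"
    by (simp add: poly_altdef lessThan_Suc_atMost nat_add_distrib)
qed

lemma poly_fun_le_poly:
  assumes "0 \<le> m" and "degree (p :: real poly) \<le> nat m"
  shows "poly_fun_le m (poly p)"
  unfolding poly_fun_le_def
proof (intro exI allI)
  fix t :: real
  show "poly p t = (\<Sum>i<nat (m + 1). coeff p i * t ^ i)"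
    using poly_eq_sum_upto[OF assms(2)] assms(1)
    by (simp add: lessThan_Suc_atMost[symmetric] nat_add_distrib del: lessThan_Suc_atMost)
qed

lemma poly_fun_le_obtain_poly:
  assumes "poly_fun_le m f"
  obtains p :: "real poly" where "f = poly p" and "degree p \<le> nat m"
proof -
  obtain c where c: "\<And>t. f t = (\<Sum>i<nat (m + 1). c i * t ^ i)"
    using assms unfolding poly_fun_le_def by blast
  define p where "p = (\<Sum>i<nat (m + 1). monom (c i) i)"
  have "f = poly p"
    unfolding p_def fun_eq_iff c by (simp add: poly_sum poly_monom)
  moreover have "degree p \<le> nat m"
    unfolding p_def by (rule degree_sum_le) (auto intro: order.trans[OF degree_monom_le])
  ultimately show ?thesis by (rule that)
qed

text \<open>The right-hand side of the theorem on \<open>[-1, 1]\<close>, evaluated at the derivative \<open>q\<close> of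
  \<open>\<phi>\<close>: hence the shift \<open>i - 1\<close> in the derivative order.\<close>
definition dof_norm :: "((real \<Rightarrow> real) \<Rightarrow> real) \<Rightarrow> int \<Rightarrow> int \<Rightarrow> real poly \<Rightarrow> real" where
  "dof_norm I r k q =
     (\<Sum>i\<in>{1..(k - 1) div 2}. \<bar>poly ((pderiv ^^ (nat i - 1)) q) (-1)\<bar>)
   + (\<Sum>i\<in>{1..k div 2}. \<bar>poly ((pderiv ^^ (nat i - 1)) q) 1\<bar>)
   + (\<Sum>i\<in>{(if k = 0 then 1 else 0)..r - k}. \<bar>I (\<lambda>s. (1 + s) ^ nat i * poly q s)\<bar>)"

definition dof_index :: "int \<Rightarrow> int \<Rightarrow> (nat \<times> int) set" where
  "dof_index r k = Pair 0 ` {1..(k - 1) div 2} \<union> Pair 1 ` {1..k div 2}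
     \<union> Pair 2 ` {(if k = 0 then 1 else 0)..r - k}"

locale poly_linear_functional =
  fixes I :: "(real \<Rightarrow> real) \<Rightarrow> real"
  assumes add: "\<And>f g. is_poly_fun f \<Longrightarrow> is_poly_fun g \<Longrightarrow> I (\<lambda>t. f t + g t) = I f + I g"
    and scale: "\<And>f c. is_poly_fun f \<Longrightarrow> I (\<lambda>t. c * f t) = c * I f"
begin

definition Ipoly :: "real poly \<Rightarrow> real" where
  "Ipoly p = I (poly p)"

lemma Ipoly_add: "Ipoly (p + q) = Ipoly p + Ipoly q"
  using add[OF is_poly_fun_poly is_poly_fun_poly] by (simp add: Ipoly_def poly_add[abs_def])

lemma Ipoly_smult: "Ipoly (smult c p) = c * Ipoly p"
  using scale[OF is_poly_fun_poly] by (simp add: Ipoly_def poly_smult[abs_def])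

lemma Ipoly_sum: "Ipoly (sum f A) = (\<Sum>x\<in>A. Ipoly (f x))"
proof (induction A rule: infinite_finite_induct)
  case empty
  show ?case using Ipoly_smult[of 0 0] by simp
qed (simp_all add: Ipoly_add Ipoly_smult[of 0 0, simplified])

text \<open>Expand \<open>P\<close> in powers of \<open>1 + t\<close>.\<close>
lemma Ipoly_eq_0_if_moments_vanish:
  assumes moments: "\<forall>i\<le>n. Ipoly ([:1, 1:] ^ (e + i) * q) = 0" and "degree P \<le> n"
  shows "Ipoly ([:1, 1:] ^ e * P * q) = 0"
proof -
  define P' where "P' = P \<circ>\<^sub>p [:-1, 1:]"
  have "degree P' \<le> n"
    unfolding P'_def using assms(2) degree_pcompose_le[of P "[:-1, 1:]"] by simp
  have "P = (\<Sum>i\<le>n. smult (coeff P' i) ([:1, 1:] ^ i))"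
  proof (rule poly_ext)
    fix t :: real
    have "poly P t = poly P' (t + 1)"
      by (simp add: P'_def poly_pcompose)
    also have "\<dots> = (\<Sum>i\<le>n. coeff P' i * (t + 1) ^ i)"
      by (rule poly_eq_sum_upto[OF \<open>degree P' \<le> n\<close>])
    finally show "poly P t = poly (\<Sum>i\<le>n. smult (coeff P' i) ([:1, 1:] ^ i)) t"
      by (simp add: poly_sum poly_power add.commute)
  qed
  then have "[:1, 1:] ^ e * P * q = (\<Sum>i\<le>n. smult (coeff P' i) ([:1, 1:] ^ (e + i) * q))"
    by (simp add: sum_distrib_left sum_distrib_right power_add mult_ac)
  then show ?thesis
    using moments by (simp add: Ipoly_sum Ipoly_smult)
qed

lemma A1_eq_0:
  assumes "A1 I r k" and "0 \<le> r - max 1 k" and "degree w \<le> nat (r - max 1 k)"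
    and orth: "\<And>P. degree P \<le> nat (r - max 1 k) \<Longrightarrow>
      Ipoly ([:1, -1:] ^ nat (k div 2) * [:1, 1:] ^ nat \<bar>(k - 1) div 2\<bar> * w * P) = 0"
  shows "w = 0"
proof -
  have "I (\<lambda>t. (1 - t) ^ nat (k div 2) * (1 + t) ^ nat \<bar>(k - 1) div 2\<bar> * poly w t * \<phi> t) = 0"
    if \<phi>: "poly_fun_le (r - max 1 k) \<phi>" for \<phi>
  proof -
    obtain P where P: "\<phi> = poly P" "degree P \<le> nat (r - max 1 k)"
      using poly_fun_le_obtain_poly[OF \<phi>] by blast
    show ?thesis
      using orth[OF P(2)] by (simp add: Ipoly_def P(1) poly_power poly_mult[abs_def])
  qed
  then have "\<forall>t\<in>{-1..1}. poly w t = 0"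
    using assms(1-3) poly_fun_le_poly unfolding A1_def by blast
  then show ?thesis
    by (rule poly_eq_0_if_vanishes_on_Icc[rotated]) simp
qed

lemma dofs_unisolvent_k_eq_0:
  assumes "A1 I r 0"
    and deg: "\<forall>i\<ge>nat r. coeff q i = 0"
    and moments: "\<forall>i\<in>{1..r}. Ipoly ([:1, 1:] ^ nat i * q) = 0"
  shows "q = 0"
proof (rule ccontr)
  assume "q \<noteq> 0"
  then have deg_q: "degree q < nat r"
    using deg by (metis leading_coeff_0_iff not_le)
  have "q = 0"
  proof (rule A1_eq_0[OF \<open>A1 I r 0\<close>])
    show "0 \<le> r - max 1 0" and "degree q \<le> nat (r - max 1 0)"
      using deg_q by auto
  next
    fix P :: "real poly" assume "degree P \<le> nat (r - max 1 0)"
    moreover have "\<forall>i\<le>nat (r - max 1 0). Ipoly ([:1, 1:] ^ (1 + i) * q) = 0"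
    proof (intro allI impI)
      fix i assume "i \<le> nat (r - max 1 0)"
      then have "int (1 + i) \<in> {1..r}"
        using deg_q by auto
      then show "Ipoly ([:1, 1:] ^ (1 + i) * q) = 0"
        using moments by (metis nat_int)
    qed
    ultimately have "Ipoly ([:1, 1:] ^ 1 * P * q) = 0"
      by (intro Ipoly_eq_0_if_moments_vanish)
    then show "Ipoly ([:1, -1:] ^ nat (0 div 2) * [:1, 1:] ^ nat \<bar>(0 - 1) div 2\<bar> * q * P) = 0"
      by (simp only: power_0 mult_1_left mult_ac) simp
  qed
  with \<open>q \<noteq> 0\<close> show False ..
qed

lemma dofs_unisolvent_k_pos:
  assumes "0 < k" and "k \<le> r" and "A1 I r k"
    and deg: "\<forall>i\<ge>nat r. coeff q i = 0"
    and left: "\<forall>i<nat ((k - 1) div 2). poly ((pderiv ^^ i) q) (-1) = 0"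
    and right: "\<forall>i<nat (k div 2). poly ((pderiv ^^ i) q) 1 = 0"
    and moments: "\<forall>i\<in>{0..r - k}. Ipoly ([:1, 1:] ^ nat i * q) = 0"
  shows "q = 0"
proof (rule ccontr)
  assume "q \<noteq> 0"
  define m1 where "m1 = nat ((k - 1) div 2)"
  define m2 where "m2 = nat (k div 2)"
  obtain w where w: "q = [:1, 1:] ^ m1 * [:1, -1:] ^ m2 * w"
    using poly_factor_at_plus_minus_one left right unfolding m1_def m2_def by blast
  have "w \<noteq> 0"
    using \<open>q \<noteq> 0\<close> w by auto
  then have "degree q = m1 + m2 + degree w"
    unfolding w by (simp add: degree_mult_eq degree_power_eq)
  moreover have "degree q < nat r"
    using deg \<open>q \<noteq> 0\<close> by (metis leading_coeff_0_iff not_le)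
  moreover have "int m1 + int m2 = k - 1"
    unfolding m1_def m2_def using \<open>0 < k\<close> by simp
  ultimately have deg_w: "degree w \<le> nat (r - k)"
    by simp
  have "w = 0"
  proof (rule A1_eq_0[OF \<open>A1 I r k\<close>])
    show "0 \<le> r - max 1 k" and "degree w \<le> nat (r - max 1 k)"
      using \<open>0 < k\<close> \<open>k \<le> r\<close> deg_w by auto
  next
    fix P :: "real poly" assume "degree P \<le> nat (r - max 1 k)"
    moreover have "\<forall>i\<le>nat (r - max 1 k). Ipoly ([:1, 1:] ^ (0 + i) * q) = 0"
    proof (intro allI impI)
      fix i assume "i \<le> nat (r - max 1 k)"
      then have "int i \<in> {0..r - k}"
        using \<open>0 < k\<close> \<open>k \<le> r\<close> by auto
      then show "Ipoly ([:1, 1:] ^ (0 + i) * q) = 0"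
        using moments by (metis nat_int plus_nat.add_0)
    qed
    ultimately have "Ipoly ([:1, 1:] ^ 0 * P * q) = 0"
      by (intro Ipoly_eq_0_if_moments_vanish)
    moreover have "nat \<bar>(k - 1) div 2\<bar> = m1"
      unfolding m1_def using \<open>0 < k\<close> by simp
    ultimately show "Ipoly ([:1, -1:] ^ nat (k div 2) * [:1, 1:] ^ nat \<bar>(k - 1) div 2\<bar> * w * P) = 0"
      by (simp add: w m2_def[symmetric] mult_ac)
  qed
  with \<open>w \<noteq> 0\<close> show False ..
qed

definition dof :: "real poly \<Rightarrow> nat \<times> int \<Rightarrow> real" where
  "dof q x =
    (if fst x = 0 then poly ((pderiv ^^ (nat (snd x) - 1)) q) (-1)
     else if fst x = 1 then poly ((pderiv ^^ (nat (snd x) - 1)) q) 1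
     else Ipoly ([:1, 1:] ^ nat (snd x) * q))"

lemma dof_add: "dof (p + q) x = dof p x + dof q x"
  unfolding dof_def by (simp add: higher_pderiv_add Ipoly_add distrib_left)

lemma dof_smult: "dof (smult c p) x = c * dof p x"
  unfolding dof_def by (simp add: higher_pderiv_smult Ipoly_smult)

lemma sum_abs_dof: "(\<Sum>x\<in>dof_index r k. \<bar>dof q x\<bar>) = dof_norm I r k q"
proof -
  have "(\<Sum>x\<in>dof_index r k. \<bar>dof q x\<bar>) = (\<Sum>i\<in>{1..(k - 1) div 2}. \<bar>dof q (0, i)\<bar>)
      + (\<Sum>i\<in>{1..k div 2}. \<bar>dof q (1, i)\<bar>) + (\<Sum>i\<in>{(if k = 0 then 1 else 0)..r - k}. \<bar>dof q (2, i)\<bar>)"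
    unfolding dof_index_def by (subst sum.union_disjoint; auto simp: sum.reindex inj_on_def)+
  moreover have "Ipoly ([:1, 1:] ^ n * q) = I (\<lambda>s. (1 + s) ^ n * poly q s)" for n
    unfolding Ipoly_def by (simp add: poly_power poly_mult[abs_def])
  ultimately show ?thesis
    unfolding dof_def dof_norm_def by simp
qed

lemma dofs_unisolvent:
  assumes "0 \<le> k" and "k \<le> r" and "A1 I r k"
    and deg: "\<forall>i\<ge>nat r. coeff q i = 0" and dofs: "\<forall>x\<in>dof_index r k. dof q x = 0"
  shows "q = 0"
proof -
  have left: "\<forall>i<nat ((k - 1) div 2). poly ((pderiv ^^ i) q) (-1) = 0"
  proof (intro allI impI)
    fix i assume "i < nat ((k - 1) div 2)"
    then have "dof q (0, int (Suc i)) = 0"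
      using dofs unfolding dof_index_def by auto
    then show "poly ((pderiv ^^ i) q) (-1) = 0"
      unfolding dof_def by (simp only: nat_int fst_conv snd_conv diff_Suc_1) simp
  qed
  have right: "\<forall>i<nat (k div 2). poly ((pderiv ^^ i) q) 1 = 0"
  proof (intro allI impI)
    fix i assume "i < nat (k div 2)"
    then have "dof q (1, int (Suc i)) = 0"
      using dofs unfolding dof_index_def by auto
    then show "poly ((pderiv ^^ i) q) 1 = 0"
      unfolding dof_def by (simp only: nat_int fst_conv snd_conv diff_Suc_1) simp
  qed
  have moments: "\<forall>i\<in>{(if k = 0 then 1 else 0)..r - k}. Ipoly ([:1, 1:] ^ nat i * q) = 0"
  proof
    fix i assume "i \<in> {(if k = 0 then 1 else 0)..r - k}"
    then have "dof q (2, i) = 0"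
      using dofs unfolding dof_index_def by blast
    then show "Ipoly ([:1, 1:] ^ nat i * q) = 0"
      unfolding dof_def by simp
  qed
  show ?thesis
  proof (cases "k = 0")
    case True
    then show ?thesis
      using dofs_unisolvent_k_eq_0 assms(3) deg moments by simp
  next
    case False
    then show ?thesis
      using dofs_unisolvent_k_pos[OF _ assms(2,3) deg left right] assms(1) moments by simp
  qed
qed

lemma poly_le_dof_norm:
  assumes "0 \<le> k" and "k \<le> r" and "A1 I r k"
  obtains C where "C > 0"
    and "\<And>q s. \<forall>i\<ge>nat r. coeff q i = 0 \<Longrightarrow> s \<in> {-1..1} \<Longrightarrow> \<bar>poly q s\<bar> \<le> C * dof_norm I r k q"
proof -
  have "finite (dof_index r k)"
    unfolding dof_index_def by simp
  with poly_bounded_by_separating_functionals[of "dof_index r k" dof "nat r", OF _ dof_add dof_smult]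
  show ?thesis
    using dofs_unisolvent[OF assms] that unfolding sum_abs_dof by metis
qed

end

definition vecpoly :: "('a::euclidean_space \<Rightarrow> real poly) \<Rightarrow> real \<Rightarrow> 'a" where
  "vecpoly Q t = (\<Sum>j\<in>Basis. poly (Q j) t *\<^sub>R j)"

lemma vecpoly_has_vector_derivative:
  "(vecpoly Q has_vector_derivative vecpoly (\<lambda>j. pderiv (Q j)) t) (at t within S)"
  unfolding vecpoly_def[abs_def]
  by (intro has_vector_derivative_sum has_vector_derivative_scaleR[of _ _ _ _ _ 0, simplified]
      has_field_derivative_at_within[OF poly_DERIV] has_vector_derivative_const)

lemma vdiff_vecpoly: "vdiff (vecpoly Q) = vecpoly (\<lambda>j. pderiv (Q j))"
  unfolding vdiff_def fun_eq_iff by (intro allI vector_derivative_at vecpoly_has_vector_derivative)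

lemma vdiffn_vecpoly: "vdiffn i (vecpoly Q) = vecpoly (\<lambda>j. (pderiv ^^ i) (Q j))"
  by (induction i) (simp_all add: vdiffn_def vdiff_vecpoly)

lemma continuous_on_vecpoly: "continuous_on S (vecpoly Q)"
  unfolding continuous_on_eq_continuous_within
  by (intro ballI has_vector_derivative_continuous[OF vecpoly_has_vector_derivative])

lemma inner_vecpoly: "j \<in> Basis \<Longrightarrow> vecpoly Q t \<bullet> j = poly (Q j) t"
  unfolding vecpoly_def by (simp add: inner_sum_left inner_Basis if_distrib cong: if_cong)

lemma norm_vecpoly_le: "norm (vecpoly Q t) \<le> (\<Sum>j\<in>Basis. \<bar>poly (Q j) t\<bar>)"
  unfolding vecpoly_def by (rule order.trans[OF norm_sum]) simp

lemma abs_poly_le_norm_vecpoly: "j \<in> Basis \<Longrightarrow> \<bar>poly (Q j) t\<bar> \<le> norm (vecpoly Q t)"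
  using Basis_le_norm[of j "vecpoly Q t"] by (simp add: inner_vecpoly)

lemma vpoly_fun_le_obtain_vecpoly:
  fixes \<phi> :: "real \<Rightarrow> 'a::euclidean_space"
  assumes "vpoly_fun_le r \<phi>" and "0 \<le> r"
  obtains Q where "\<phi> = vecpoly Q" and "\<And>j. degree (Q j) \<le> nat r"
proof -
  obtain c where c: "\<And>t. \<phi> t = (\<Sum>i<nat (r + 1). t ^ i *\<^sub>R c i)"
    using assms(1) unfolding vpoly_fun_le_def by blast
  define Q where "Q j = (\<Sum>i<nat (r + 1). monom (c i \<bullet> j) i)" for j :: 'a
  have "\<phi> = vecpoly Q"
  proof
    fix t
    have "vecpoly Q t = (\<Sum>j\<in>Basis. (\<phi> t \<bullet> j) *\<^sub>R j)"
      unfolding vecpoly_def Q_def c by (simp add: poly_sum poly_monom inner_sum_left mult.commute)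
    then show "\<phi> t = vecpoly Q t"
      by (simp add: euclidean_representation)
  qed
  moreover have "degree (Q j) \<le> nat r" for j
    unfolding Q_def using assms(2)
    by (intro degree_sum_le) (auto intro: order.trans[OF degree_monom_le])
  ultimately show ?thesis
    using that by blast
qed

lemma Tinv_Tmap: "a < b \<Longrightarrow> Tinv a b (Tmap a b s) = s"
  unfolding Tinv_def Tmap_def by (simp add: field_simps)

lemma Tmap_Tinv: "a < b \<Longrightarrow> Tmap a b (Tinv a b t) = t"
  unfolding Tinv_def Tmap_def by (simp add: field_simps)

lemma Tmap_minus_one: "Tmap a b (-1) = a" and Tmap_one: "Tmap a b 1 = b"
  unfolding Tmap_def by (simp_all add: field_simps)

lemma Tinv_mem_Icc: "a < b \<Longrightarrow> t \<in> {a..b} \<Longrightarrow> Tinv a b t \<in> {-1..1}"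
  unfolding Tinv_def by (auto simp: field_simps)

lemma poly_pcompose_Tmap: "poly (p \<circ>\<^sub>p [:(a + b) / 2, (b - a) / 2:]) s = poly p (Tmap a b s)"
  by (simp add: poly_pcompose Tmap_def mult.commute)

lemma inner_loc_int:
  "j \<in> Basis \<Longrightarrow> loc_int I a b \<psi> \<bullet> j = (b - a) / 2 * I (\<lambda>s. \<psi> (Tmap a b s) \<bullet> j)"
  unfolding loc_int_def by (simp add: inner_sum_left inner_Basis if_distrib cong: if_cong)

lemma coeff_pderiv_pcompose_eq_0:
  fixes p L :: "real poly"
  assumes "degree p \<le> n" and "degree L \<le> 1" and "n \<le> i"
  shows "coeff (pderiv p \<circ>\<^sub>p L) i = 0"
proof (cases "pderiv p = 0")
  case False
  then have "degree (pderiv p) < n"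
    using assms(1) by (auto simp: degree_pderiv pderiv_eq_0_iff)
  moreover have "degree (pderiv p \<circ>\<^sub>p L) \<le> degree (pderiv p) * 1"
    using degree_pcompose_le[of "pderiv p" L] mult_le_mono2[OF assms(2)] by (rule order.trans)
  ultimately show ?thesis
    using assms(3) by (intro coeff_eq_0) simp
qed simp

definition local_dof_norm ::
  "((real \<Rightarrow> real) \<Rightarrow> real) \<Rightarrow> int \<Rightarrow> int \<Rightarrow> real \<Rightarrow> real \<Rightarrow> (real \<Rightarrow> 'a::euclidean_space) \<Rightarrow> real"
where
  "local_dof_norm I r k a b \<phi> =
     (\<Sum>i\<in>{1..(k - 1) div 2}. ((b - a) / 2) ^ nat i * norm (vdiffn (nat i) \<phi> a))
   + (\<Sum>i\<in>{1..k div 2}. ((b - a) / 2) ^ nat i * norm (vdiffn (nat i) \<phi> b))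
   + (\<Sum>i\<in>{(if k = 0 then 1 else 0)..r - k}.
        norm (loc_int I a b (\<lambda>t. (1 + Tinv a b t) ^ nat i *\<^sub>R vdiff \<phi> t)))"


lemma dof_norm_pullback_le:
  fixes Q :: "'a::euclidean_space \<Rightarrow> real poly"
  assumes "a < b" and "j \<in> Basis"
  shows "(b - a) / 2 * dof_norm I r k (pderiv (Q j) \<circ>\<^sub>p [:(a + b) / 2, (b - a) / 2:])
    \<le> local_dof_norm I r k a b (vecpoly Q)"
proof -
  define h where "h = (b - a) / 2"
  define q where "q = pderiv (Q j) \<circ>\<^sub>p [:(a + b) / 2, h:]"
  have "h > 0"
    using assms(1) by (simp add: h_def)
  have endpoint: "h * \<bar>poly ((pderiv ^^ (nat i - 1)) q) s\<bar>
      \<le> h ^ nat i * norm (vdiffn (nat i) (vecpoly Q) (Tmap a b s))" if "1 \<le> i" for i s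
  proof -
    define m where "m = nat i - 1"
    have m: "nat i = Suc m"
      unfolding m_def using that by simp
    have "(pderiv ^^ m) q = smult (h ^ m) ((pderiv ^^ Suc m) (Q j) \<circ>\<^sub>p [:(a + b) / 2, h:])"
      unfolding q_def higher_pderiv_pcompose_linear by (simp add: funpow_Suc_right del: funpow.simps)
    then have "h * \<bar>poly ((pderiv ^^ m) q) s\<bar> = h ^ nat i * \<bar>poly ((pderiv ^^ nat i) (Q j)) (Tmap a b s)\<bar>"
      using \<open>h > 0\<close> unfolding h_def m by (simp add: poly_pcompose_Tmap abs_mult)
    also have "\<dots> \<le> h ^ nat i * norm (vdiffn (nat i) (vecpoly Q) (Tmap a b s))"
      unfolding vdiffn_vecpoly using \<open>h > 0\<close> assms(2)
      by (intro mult_left_mono abs_poly_le_norm_vecpoly) simp_all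
    finally show ?thesis
      by (simp add: m_def)
  qed
  have moment: "h * \<bar>I (\<lambda>s. (1 + s) ^ nat i * poly q s)\<bar>
      \<le> norm (loc_int I a b (\<lambda>t. (1 + Tinv a b t) ^ nat i *\<^sub>R vdiff (vecpoly Q) t))" for i
  proof -
    have "(\<lambda>s. ((1 + Tinv a b (Tmap a b s)) ^ nat i *\<^sub>R vdiff (vecpoly Q) (Tmap a b s)) \<bullet> j)
        = (\<lambda>s. (1 + s) ^ nat i * poly q s)"
      using assms by (simp add: Tinv_Tmap vdiff_vecpoly inner_vecpoly q_def h_def poly_pcompose_Tmap)
    then have "h * \<bar>I (\<lambda>s. (1 + s) ^ nat i * poly q s)\<bar>
        = \<bar>loc_int I a b (\<lambda>t. (1 + Tinv a b t) ^ nat i *\<^sub>R vdiff (vecpoly Q) t) \<bullet> j\<bar>"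
      using assms \<open>h > 0\<close> by (simp add: inner_loc_int h_def abs_mult)
    also have "\<dots> \<le> norm (loc_int I a b (\<lambda>t. (1 + Tinv a b t) ^ nat i *\<^sub>R vdiff (vecpoly Q) t))"
      using assms(2) by (rule Basis_le_norm)
    finally show ?thesis .
  qed
  have "h * dof_norm I r k q \<le> local_dof_norm I r k a b (vecpoly Q)"
    unfolding dof_norm_def local_dof_norm_def distrib_left sum_distrib_left h_def[symmetric]
    using endpoint[of _ "-1"] endpoint[of _ 1] moment
    by (intro add_mono sum_mono) (auto simp: Tmap_minus_one Tmap_one)
  then show ?thesis
    unfolding q_def h_def .
qed

lemma Sup_norm_vdiff_vecpoly_le:
  fixes Q :: "'a::euclidean_space \<Rightarrow> real poly"
  assumes "a < b" and "0 \<le> C"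
    and reference_bound: "\<And>q s. \<forall>i\<ge>nat r. coeff q i = 0 \<Longrightarrow> s \<in> {-1..1} \<Longrightarrow>
      \<bar>poly q s\<bar> \<le> C * dof_norm I r k q"
    and deg: "\<And>j. degree (Q j) \<le> nat r"
  shows "(b - a) * Sup ((\<lambda>t. norm (vdiff (vecpoly Q) t)) ` {a<..b})
    \<le> 2 * C * DIM('a) * local_dof_norm I r k a b (vecpoly Q)"
proof -
  define L where "L = local_dof_norm I r k a b (vecpoly Q)"
  define q where "q j = pderiv (Q j) \<circ>\<^sub>p [:(a + b) / 2, (b - a) / 2:]" for j
  have pointwise: "(b - a) / 2 * norm (vdiff (vecpoly Q) t) \<le> C * DIM('a) * L" if "t \<in> {a..b}" for t
  proof -
    define s where "s = Tinv a b t"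
    have s: "s \<in> {-1..1}" "Tmap a b s = t"
      unfolding s_def using Tinv_mem_Icc[OF assms(1) that] Tmap_Tinv[OF assms(1)] by simp_all
    have "(b - a) / 2 * norm (vdiff (vecpoly Q) t) \<le> (b - a) / 2 * (\<Sum>j\<in>Basis. \<bar>poly (pderiv (Q j)) t\<bar>)"
      unfolding vdiff_vecpoly using assms(1) by (intro mult_left_mono norm_vecpoly_le) simp
    also have "\<dots> = (\<Sum>j\<in>Basis. (b - a) / 2 * \<bar>poly (q j) s\<bar>)"
      by (simp add: q_def poly_pcompose_Tmap s sum_distrib_left)
    also have "\<dots> \<le> (\<Sum>j\<in>(Basis :: 'a set). C * L)"
    proof (rule sum_mono)
      fix j :: 'a assume "j \<in> Basis"
      have "\<forall>i\<ge>nat r. coeff (q j) i = 0"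
        unfolding q_def by (auto intro!: coeff_pderiv_pcompose_eq_0[OF deg])
      then have "(b - a) / 2 * \<bar>poly (q j) s\<bar> \<le> C * ((b - a) / 2 * dof_norm I r k (q j))"
        using reference_bound[OF _ s(1)] assms(1) by (simp add: mult.left_commute)
      also have "\<dots> \<le> C * L"
        unfolding L_def q_def using dof_norm_pullback_le[OF assms(1) \<open>j \<in> Basis\<close>] assms(2)
        by (rule mult_left_mono)
      finally show "(b - a) / 2 * \<bar>poly (q j) s\<bar> \<le> C * L" .
    qed
    finally show ?thesis
      by (simp add: mult_ac)
  qed
  have "Sup ((\<lambda>t. norm (vdiff (vecpoly Q) t)) ` {a<..b}) \<le> 2 * C * DIM('a) * L / (b - a)"
    using assms(1) pointwise by (intro cSUP_least) (auto simp: field_simps)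
  then show ?thesis
    unfolding L_def using assms(1) by (simp add: field_simps)
qed

lemma integral_le_length_mult_Sup:
  fixes f :: "real \<Rightarrow> real"
  assumes "a < b" and cont: "continuous_on {a..b} f"
  shows "integral {a..b} f \<le> (b - a) * Sup (f ` {a<..b})"
proof -
  have "bdd_above (f ` {a..b})"
    using compact_continuous_image[OF cont compact_Icc] by (intro bounded_imp_bdd_above compact_imp_bounded)
  then have "bdd_above (f ` {a<..b})"
    by (rule bdd_above_mono) auto
  then have "f t \<le> Sup (f ` {a<..b})" if "t \<in> {a<..b}" for t
    by (rule cSUP_upper[OF that])
  then have le_Sup: "f t \<le> Sup (f ` {a<..b})" if "t \<in> {a..b}" for t
    using continuous_le_on_closure[of "{a<..b}" f t] cont that assms(1) by auto
  have "integral {a..b} f \<le> integral {a..b} (\<lambda>_. Sup (f ` {a<..b}))"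
    using le_Sup by (intro integral_le integrable_continuous_interval cont) auto
  then show ?thesis
    using assms(1) by simp
qed

lemma Sup_norm_le_min_endpoint_plus_integral:
  fixes \<phi> \<phi>' :: "real \<Rightarrow> 'a::banach"
  assumes "a < b"
    and deriv: "\<And>t. (\<phi> has_vector_derivative \<phi>' t) (at t)"
    and cont: "continuous_on {a..b} \<phi>'"
  shows "Sup ((\<lambda>t. norm (\<phi> t)) ` {a<..b})
    \<le> min (norm (\<phi> a)) (norm (\<phi> b)) + integral {a..b} (\<lambda>t. norm (\<phi>' t))"
proof -
  define M where "M = integral {a..b} (\<lambda>t. norm (\<phi>' t))"
  have integrable: "(\<lambda>t. norm (\<phi>' t)) integrable_on {u..v}" if "a \<le> u" "v \<le> b" for u v
    using that by (intro integrable_continuous_interval continuous_on_norm continuous_on_subset[OF cont]) auto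
  have increment: "norm (\<phi> v - \<phi> u) \<le> M" if "a \<le> u" "u \<le> v" "v \<le> b" for u v
  proof -
    have "(\<phi>' has_integral (\<phi> v - \<phi> u)) {u..v}"
      using \<open>u \<le> v\<close> deriv by (intro fundamental_theorem_of_calculus) (auto intro: has_vector_derivative_at_within)
    then have "norm (\<phi> v - \<phi> u) \<le> integral {u..v} (\<lambda>t. norm (\<phi>' t))"
      using integrable[OF that(1,3)]
      by (metis integral_unique has_integral_integrable integral_norm_bound_integral order_refl)
    also have "\<dots> \<le> M"
      unfolding M_def using that integrable[of u v] integrable[of a b]
      by (intro integral_subset_le) auto
    finally show ?thesis .
  qed
  have "norm (\<phi> t) \<le> min (norm (\<phi> a)) (norm (\<phi> b)) + M" if "t \<in> {a<..b}" for t
    using increment[of a t] increment[of t b] that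
      norm_triangle_sub[of "\<phi> t" "\<phi> a"] norm_triangle_sub[of "\<phi> t" "\<phi> b"] norm_minus_commute[of "\<phi> t" "\<phi> b"]
    by auto
  then show ?thesis
    unfolding M_def using assms(1) by (intro cSUP_least) auto
qed

theorem mainTheorem4:
  fixes I :: "(real \<Rightarrow> real) \<Rightarrow> real" and r k :: int
  assumes "0 \<le> k" and "k \<le> r"
    and I_add: "\<And>f g. is_poly_fun f \<Longrightarrow> is_poly_fun g \<Longrightarrow> I (\<lambda>t. f t + g t) = I f + I g"
    and I_scale: "\<And>f c. is_poly_fun f \<Longrightarrow> I (\<lambda>t. c * f t) = c * I f"
    and "A1 I r k"
  shows "\<exists>\<kappa>>0. \<forall>(a::real) b (\<phi>::real \<Rightarrow> 'a::euclidean_space).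
     a < b \<longrightarrow> b - a \<le> 1 \<longrightarrow> vpoly_fun_le r \<phi> \<longrightarrow>
       integral {a..b} (\<lambda>t. norm (vdiff \<phi> t))
         \<le> (b - a) * Sup ((\<lambda>t. norm (vdiff \<phi> t)) ` {a<..b})
     \<and> (b - a) * Sup ((\<lambda>t. norm (vdiff \<phi> t)) ` {a<..b})
         \<le> \<kappa> * ((\<Sum>i\<in>{1..(k - 1) div 2}. ((b - a) / 2) ^ nat i * norm (vdiffn (nat i) \<phi> a))
                + (\<Sum>i\<in>{1..k div 2}. ((b - a) / 2) ^ nat i * norm (vdiffn (nat i) \<phi> b))
                + (\<Sum>i\<in>{(if k = 0 then 1 else 0)..r - k}.
                     norm (loc_int I a b (\<lambda>t. (1 + Tinv a b t) ^ nat i *\<^sub>R vdiff \<phi> t))))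
     \<and> Sup ((\<lambda>t. norm (\<phi> t)) ` {a<..b})
         \<le> min (norm (\<phi> a)) (norm (\<phi> b)) + integral {a..b} (\<lambda>t. norm (vdiff \<phi> t))"
proof -
  interpret poly_linear_functional I
    using I_add I_scale by unfold_locales
  obtain C where "C > 0" and reference_bound: "\<And>q s. \<forall>i\<ge>nat r. coeff q i = 0 \<Longrightarrow> s \<in> {-1..1} \<Longrightarrow>
      \<bar>poly q s\<bar> \<le> C * dof_norm I r k q"
    using poly_le_dof_norm[OF assms(1,2,5)] by blast
  show ?thesis
  proof (intro exI[of _ "2 * C * DIM('a)"] conjI allI impI, fold local_dof_norm_def)
    show "2 * C * DIM('a) > 0"
      using \<open>C > 0\<close> by simp
    fix a b :: real and \<phi> :: "real \<Rightarrow> 'a"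
    assume "a < b" and "b - a \<le> 1" and "vpoly_fun_le r \<phi>"
    then obtain Q where \<phi>: "\<phi> = vecpoly Q" and deg: "\<And>j. degree (Q j) \<le> nat r"
      using vpoly_fun_le_obtain_vecpoly assms(1,2) by (metis order.trans)
    have cont: "continuous_on {a..b} (vdiff \<phi>)"
      unfolding \<phi> vdiff_vecpoly by (rule continuous_on_vecpoly)
    show "integral {a..b} (\<lambda>t. norm (vdiff \<phi> t)) \<le> (b - a) * Sup ((\<lambda>t. norm (vdiff \<phi> t)) ` {a<..b})"
      using \<open>a < b\<close> cont by (intro integral_le_length_mult_Sup continuous_on_norm)
    show "(b - a) * Sup ((\<lambda>t. norm (vdiff \<phi> t)) ` {a<..b})
      \<le> 2 * C * DIM('a) * local_dof_norm I r k a b \<phi>"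
      unfolding \<phi> using \<open>a < b\<close> \<open>C > 0\<close> reference_bound deg
      by (intro Sup_norm_vdiff_vecpoly_le) simp_all
    show "Sup ((\<lambda>t. norm (\<phi> t)) ` {a<..b}) \<le> min (norm (\<phi> a)) (norm (\<phi> b)) + integral {a..b} (\<lambda>t. norm (vdiff \<phi> t))"
      using \<open>a < b\<close> cont unfolding \<phi>
      by (intro Sup_norm_le_min_endpoint_plus_integral)
        (simp_all add: vdiff_vecpoly vecpoly_has_vector_derivative)
  qed
qed

end
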